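(* Let $\lambda$ be a partition with $n$ parts and let $\beta \in U_\lambda(n)$. If $\beta \notin UGC_\lambda(n)$, then the terminal pair $(\lambda,\beta)$ is not nonpermutable; i.e. there is a permutation $\pi \neq (1,\dots,n)$ of $[n]$ with $\mathcal{LD}_\lambda(\beta;\pi) \neq \emptyset$.
   Context: Fix an integer $n \geq 1$ and write $[k] = \{1,\dots,k\}$. A partition is $\lambda = (\lambda_1,\dots,\lambda_n)$ with $\lambda_1 \geq \dots \geq \lambda_n \geq 0$ integers. Let $R_\lambda \subseteq [n-1]$ be the set of $q \in [n-1]$ with $\lambda_q > \lambda_{q+1}$; write its elements $q_1 < \dots < q_r$, and set $q_0 := 0$, $q_{r+1} := n$. For $h \in [r+1]$ the $h$-th carrel is the index interval $\{q_{h-1}+1,\dots,q_h\}$. A $\lambda$-tuple is an $n$-tuple $\beta$ with entries in $[n]$, considered with this carrel structure; it is upper if $\beta_i \geq i$ for all $i$. $U_\lambda(n)$ is the set of upper $\lambda$-tuples. Critical indices: for $\beta \in U_\lambda(n)$ and $h \in [r+1]$, set $x_1 := q_h$; given $x_{u-1}$, if some index $x$ with $q_{h-1} < x < x_{u-1}$ satisfies $\beta_{x_{u-1}} - \beta_x > x_{u-1} - x$, let $x_u$ be the largest such $x$, otherwise stop. The $x_u$ are the critical indices of $\beta$ in carrel $h$, and the pairs $(x_u, \beta_{x_u})$ form its critical list. The critical list of $\beta$ is a flag critical list if for every $h \in [r]$, $\beta_{q_h} \leq \beta_k$ where $k$ is the smallest critical index of $\beta$ in carrel $h+1$. $UGC_\lambda(n)$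 is the set of $\beta \in U_\lambda(n)$ whose critical list is a flag critical list. Lattice paths: lattice points are integer pairs $(a,b)$ with $a \geq 0$, $b \geq 1$. A lattice path is a sequence of lattice points each consecutive step of which is $(a,b) \to (a+1,b)$ (easterly) or $(a,b) \to (a,b+1)$ (southerly). An $n$-path is $(\Lambda_1,\dots,\Lambda_n)$ with $\Lambda_m$ a lattice path starting at $(n-m,m)$. The terminals of $(\lambda,\beta)$ are $P_m := (\lambda_m + n - m, \beta_m)$, $m \in [n]$. For a permutation $\pi$ of $[n]$, $\mathcal{LD}_\lambda(\beta;\pi)$ is the set of $n$-paths with $\Lambda_m$ ending at $P_{\pi_m}$ for every $m$ and with no two distinct components sharing a lattice point. The pair $(\lambda,\beta)$ is nonpermutable if $\mathcal{LD}_\lambda(\beta;\pi) = \emptyset$ for every permutation $\pi \neq (1,\dots,n)$. *)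

theory Defs
  imports "HOL-Combinatorics.Permutations"
begin

text \<open>Conventions: n :: nat; a partition lam and a tuple beta are functions
  nat => nat of which only the values at indices 1..n are relevant.\<close>

definition is_partition :: "nat \<Rightarrow> (nat \<Rightarrow> nat) \<Rightarrow> bool" where
  "is_partition n lam \<longleftrightarrow> (\<forall>i\<in>{1..<n}. lam (Suc i) \<le> lam i)"

definition R_set :: "nat \<Rightarrow> (nat \<Rightarrow> nat) \<Rightarrow> nat set" where
  "R_set n lam = {q \<in> {1..n-1}. lam (Suc q) < lam q}"

definition num_r :: "nat \<Rightarrow> (nat \<Rightarrow> nat) \<Rightarrow> nat" where
  "num_r n lam = card (R_set n lam)"

definition qpt :: "nat \<Rightarrow> (nat \<Rightarrow> nat) \<Rightarrow> nat \<Rightarrow> nat" where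
  "qpt n lam h = (0 # sorted_list_of_set (R_set n lam) @ [n]) ! h"

definition lam_tuple :: "nat \<Rightarrow> (nat \<Rightarrow> nat) \<Rightarrow> bool" where
  "lam_tuple n beta \<longleftrightarrow> (\<forall>i\<in>{1..n}. beta i \<in> {1..n})"

definition upper :: "nat \<Rightarrow> (nat \<Rightarrow> nat) \<Rightarrow> bool" where
  "upper n beta \<longleftrightarrow> lam_tuple n beta \<and> (\<forall>i\<in>{1..n}. i \<le> beta i)"

definition crit_step :: "(nat \<Rightarrow> nat) \<Rightarrow> nat \<Rightarrow> nat \<Rightarrow> nat \<Rightarrow> bool" where
  "crit_step beta lo xprev x \<longleftrightarrow> lo < x \<and> x < xprev \<and>
     int (beta xprev) - int (beta x) > int xprev - int x"

text \<open>Critical indices of beta in the carrel {lo+1..hi} (lo = q_(h-1), hi = q_h).\<close>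
inductive_set crit_idx :: "(nat \<Rightarrow> nat) \<Rightarrow> nat \<Rightarrow> nat \<Rightarrow> nat set"
  for beta :: "nat \<Rightarrow> nat" and lo :: nat and hi :: nat where
  start: "hi \<in> crit_idx beta lo hi"
| step: "x \<in> crit_idx beta lo hi \<Longrightarrow> \<exists>y. crit_step beta lo x y \<Longrightarrow>
          (GREATEST y. crit_step beta lo x y) \<in> crit_idx beta lo hi"

definition flag_critical :: "nat \<Rightarrow> (nat \<Rightarrow> nat) \<Rightarrow> (nat \<Rightarrow> nat) \<Rightarrow> bool" where
  "flag_critical n lam beta \<longleftrightarrow>
     (\<forall>h\<in>{1..num_r n lam}.
        beta (qpt n lam h) \<le> beta (Min (crit_idx beta (qpt n lam h) (qpt n lam (Suc h)))))"

definition UGC :: "nat \<Rightarrow> (nat \<Rightarrow> nat) \<Rightarrow> (nat \<Rightarrow> nat) \<Rightarrow> bool" where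
  "UGC n lam beta \<longleftrightarrow> upper n beta \<and> flag_critical n lam beta"

text \<open>Lattice points (a,b) with a >= 0, b >= 1; lattice paths as nonempty lists of
  points with east (a+1) or south (b+1) unit steps.\<close>
definition lattice_point :: "nat \<times> nat \<Rightarrow> bool" where
  "lattice_point p \<longleftrightarrow> 1 \<le> snd p"

definition lattice_path :: "(nat \<times> nat) list \<Rightarrow> bool" where
  "lattice_path L \<longleftrightarrow> L \<noteq> [] \<and> (\<forall>p\<in>set L. lattice_point p) \<and>
     (\<forall>i. Suc i < length L \<longrightarrow>
        (L ! Suc i = (Suc (fst (L ! i)), snd (L ! i)) \<or>
         L ! Suc i = (fst (L ! i), Suc (snd (L ! i)))))"

definition terminal :: "nat \<Rightarrow> (nat \<Rightarrow> nat) \<Rightarrow> (nat \<Rightarrow> nat) \<Rightarrow> nat \<Rightarrow> nat \<times> nat" where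
  "terminal n lam beta m = (lam m + n - m, beta m)"

definition LD :: "nat \<Rightarrow> (nat \<Rightarrow> nat) \<Rightarrow> (nat \<Rightarrow> nat) \<Rightarrow> (nat \<Rightarrow> nat)
                   \<Rightarrow> (nat \<Rightarrow> (nat \<times> nat) list) set" where
  "LD n lam beta \<pi> = {\<Lambda>.
     (\<forall>m\<in>{1..n}. lattice_path (\<Lambda> m) \<and> hd (\<Lambda> m) = (n - m, m) \<and>
                 last (\<Lambda> m) = terminal n lam beta (\<pi> m)) \<and>
     (\<forall>m\<in>{1..n}. \<forall>m'\<in>{1..n}. m \<noteq> m' \<longrightarrow> set (\<Lambda> m) \<inter> set (\<Lambda> m') = {})}"

definition nonpermutable :: "nat \<Rightarrow> (nat \<Rightarrow> nat) \<Rightarrow> (nat \<Rightarrow> nat) \<Rightarrow> bool" where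
  "nonpermutable n lam beta \<longleftrightarrow>
     (\<forall>\<pi>. \<pi> permutes {1..n} \<and> \<pi> \<noteq> id \<longrightarrow> LD n lam beta \<pi> = {})"

end

theory Submission
  imports Defs
begin

text \<open>Suppose the flag condition fails between carrels \<open>h\<close> and \<open>h+1\<close>: with \<open>q = q\<^sub>h\<close>,
  \<open>q' = q\<^sub>h\<^sub>+\<^sub>1\<close> and \<open>k\<close> the smallest critical index of carrel \<open>h+1\<close> we have \<open>\<beta>\<^sub>k < \<beta>\<^sub>q\<close>, and
  \<open>q' < n\<close> because the last carrel has \<open>n\<close> as its only critical index. Let \<open>j\<close> be the last
  index in \<open>[q,k)\<close> with \<open>\<beta>\<^sub>j > \<beta>\<^sub>k\<close>. For the cyclic permutation sending \<open>m\<close> to \<open>m+1\<close>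
  (\<open>j \<le> m < k\<close>) and \<open>k\<close> to \<open>j\<close> there are vertex-disjoint staircase paths with at most two
  descents each. Path \<open>m \<in> [k,q']\<close> descends first one column left of \<open>P\<^sub>m\<close>, down to row
  \<open>\<beta>\<^sub>k + 1 + (m - k)\<close>; path \<open>k\<close> then runs east below \<open>P\<^sub>j\<^sub>+\<^sub>1, \<dots>, P\<^sub>k\<close>, which lie in rows at most
  \<open>\<beta>\<^sub>k\<close> by the choice of \<open>j\<close>, while for \<open>k < m \<le> q'\<close> the turning row stays above \<open>P\<^sub>m\<close>
  because critical indices satisfy \<open>\<beta>\<^sub>m - m > \<beta>\<^sub>k - k\<close>. All other paths are east-then-south.\<close>

definition unit_step :: "nat \<times> nat \<Rightarrow> nat \<times> nat \<Rightarrow> bool" where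
  "unit_step p p' \<longleftrightarrow> p' = (Suc (fst p), snd p) \<or> p' = (fst p, Suc (snd p))"

lemma lattice_path_iff_successively:
  "lattice_path L \<longleftrightarrow> L \<noteq> [] \<and> (\<forall>p\<in>set L. 1 \<le> snd p) \<and> successively unit_step L"
  unfolding lattice_path_def lattice_point_def unit_step_def successively_conv_nth by blast

lemma successively_unit_step_map_upt_append:
  assumes "\<And>x. unit_step (f x) (f (Suc x))" "i \<le> j"
    and "ys \<noteq> []" "hd ys = f j" "successively unit_step ys"
  shows "successively unit_step (map f [i..<j] @ ys) \<and> hd (map f [i..<j] @ ys) = f i"
  using assms(2)
proof (induction i rule: inc_induct)
  case base
  then show ?case using assms(3-5) by simp
next
  case (step i)
  then show ?case using assms(1) by (auto simp: upt_conv_Cons successively_Cons)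
qed

definition stair_path :: "nat \<Rightarrow> nat \<Rightarrow> nat \<Rightarrow> nat \<Rightarrow> nat \<Rightarrow> nat \<Rightarrow> (nat \<times> nat) list" where
  "stair_path a0 s a1 r a2 e =
     map (\<lambda>a. (a, s)) [a0..<a1] @ map (\<lambda>b. (a1, b)) [s..<r] @
     map (\<lambda>a. (a, r)) [a1..<a2] @ map (\<lambda>b. (a2, b)) [r..<e] @ [(a2, e)]"

lemma stair_path_successively_hd:
  assumes "a0 \<le> a1" "a1 \<le> a2" "s \<le> r" "r \<le> e"
  shows "successively unit_step (stair_path a0 s a1 r a2 e) \<and> hd (stair_path a0 s a1 r a2 e) = (a0, s)"
proof -
  note run = successively_unit_step_map_upt_append
  let ?p4 = "map (\<lambda>b. (a2, b)) [r..<e] @ [(a2, e)]"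
  let ?p3 = "map (\<lambda>a. (a, r)) [a1..<a2] @ ?p4"
  let ?p2 = "map (\<lambda>b. (a1, b)) [s..<r] @ ?p3"
  have 4: "successively unit_step ?p4 \<and> hd ?p4 = (a2, r)"
    by (rule run[of "\<lambda>b. (a2, b)"]) (use assms in \<open>auto simp: unit_step_def\<close>)
  have 3: "successively unit_step ?p3 \<and> hd ?p3 = (a1, r)"
    by (rule run[of "\<lambda>a. (a, r)"]) (use assms 4 in \<open>auto simp: unit_step_def\<close>)
  have 2: "successively unit_step ?p2 \<and> hd ?p2 = (a1, s)"
    by (rule run[of "\<lambda>b. (a1, b)"]) (use assms 3 in \<open>auto simp: unit_step_def\<close>)
  show ?thesis unfolding stair_path_def
    by (rule run[of "\<lambda>a. (a, s)"]) (use assms 2 in \<open>auto simp: unit_step_def\<close>)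
qed

lemma lattice_path_stair_path:
  assumes "a0 \<le> a1" "a1 \<le> a2" "s \<le> r" "r \<le> e" "1 \<le> s"
  shows "lattice_path (stair_path a0 s a1 r a2 e)"
  unfolding lattice_path_iff_successively
  using stair_path_successively_hd[OF assms(1-4)] assms by (auto simp: stair_path_def)

lemma last_stair_path: "last (stair_path a0 s a1 r a2 e) = (a2, e)"
  by (simp add: stair_path_def)

lemma mem_stair_path:
  assumes "p \<in> set (stair_path a0 s a1 r a2 e)" "a0 \<le> a1" "a1 \<le> a2" "s \<le> r" "r \<le> e"
  shows "(snd p = s \<and> a0 \<le> fst p \<and> fst p \<le> a1) \<or> (fst p = a1 \<and> s \<le> snd p \<and> snd p \<le> r) \<or>
         (snd p = r \<and> a1 \<le> fst p \<and> fst p \<le> a2) \<or> (fst p = a2 \<and> r \<le> snd p \<and> snd p \<le> e)"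
  using assms by (auto simp: stair_path_def)

text \<open>The lower staircase either stays left of the first descent of the upper one, or
  ends in the column of that descent but enters it only below the row \<open>r\<close> where the upper
  one leaves it, or crosses the single descent column of the upper one below its end.\<close>

lemma stair_paths_disjoint:
  assumes "a0 \<le> a1" "a1 \<le> a2" "s \<le> r" "r \<le> e"
    and "b0 \<le> b1" "b1 \<le> b2" "t \<le> u" "u \<le> f"
    and "s < t"
    and "b2 < a1 \<or> (b1 < b2 \<and> b2 = a1 \<and> a1 < a2 \<and> r < u) \<or> (b0 < a0 \<and> b1 < a1 \<and> a1 = a2 \<and> e < u)"
  shows "set (stair_path a0 s a1 r a2 e) \<inter> set (stair_path b0 t b1 u b2 f) = {}"
proof (rule ccontr)
  assume "\<not> ?thesis"
  then obtain p where pa: "p \<in> set (stair_path a0 s a1 r a2 e)"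
    and pb: "p \<in> set (stair_path b0 t b1 u b2 f)"
    by blast
  show False
    using mem_stair_path[OF pa assms(1-4)] mem_stair_path[OF pb assms(5-8)] assms by linarith
qed

lemma is_partition_antimono:
  assumes "is_partition n lam" "1 \<le> i" "i \<le> i'" "i' \<le> n"
  shows "lam i' \<le> lam i"
  using assms(3,4)
proof (induction i' rule: dec_induct)
  case (step m)
  then have "lam (Suc m) \<le> lam m" using assms(1,2) unfolding is_partition_def by simp
  then show ?case using step by simp
qed simp

lemma is_partition_const_between:
  assumes "is_partition n lam" "1 \<le> a" "b \<le> n"
    and "\<And>z. a \<le> z \<Longrightarrow> z < b \<Longrightarrow> z \<notin> R_set n lam"
    and "a \<le> x" "x \<le> b"
  shows "lam x = lam a"
  using assms(5,6)
proof (induction x rule: dec_induct)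
  case (step m)
  then have "m \<in> {1..<n}" "m \<notin> R_set n lam" using assms(2-4) by auto
  then show ?case using step assms(1) unfolding is_partition_def R_set_def by fastforce
qed simp

lemma carrel_bounds:
  assumes "h \<in> {1..num_r n lam}"
  defines "q \<equiv> qpt n lam h" and "q' \<equiv> qpt n lam (Suc h)"
  shows "q \<in> R_set n lam" "q < q'" "q' \<le> n" "q' = n \<or> q' \<in> R_set n lam"
    and "\<And>z. q < z \<Longrightarrow> z < q' \<Longrightarrow> z \<notin> R_set n lam"
proof -
  define R where "R = R_set n lam"
  define ys where "ys = sorted_list_of_set R @ [n]"
  have "finite R" "R \<subseteq> {..<n}" unfolding R_def R_set_def by auto
  then have set_ys: "set ys = R \<union> {n}" and sorted: "sorted_wrt (<) ys"
    and len: "length ys = Suc (num_r n lam)"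
    unfolding ys_def num_r_def R_def[symmetric] by (auto simp: sorted_wrt_append)
  have h: "1 \<le> h" "h < length ys" using assms(1) len by auto
  have q: "q = ys ! (h - 1)" and q': "q' = ys ! h"
    unfolding q_def q'_def qpt_def ys_def R_def using h by (auto simp: nth_Cons')
  show "q \<in> R_set n lam"
  proof -
    have "h - 1 < length (sorted_list_of_set R)" using h len \<open>finite R\<close> unfolding ys_def by simp
    then have "sorted_list_of_set R ! (h - 1) \<in> R" using \<open>finite R\<close> by (metis nth_mem set_sorted_list_of_set)
    then show ?thesis using \<open>h - 1 < length (sorted_list_of_set R)\<close> unfolding q ys_def R_def by (simp add: nth_append)
  qed
  show "q < q'" using sorted h unfolding q q' by (simp add: sorted_wrt_iff_nth_less)
  have "q' \<in> R \<union> {n}" using h set_ys unfolding q' by (metis nth_mem)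
  then show "q' \<le> n" "q' = n \<or> q' \<in> R_set n lam" using \<open>R \<subseteq> {..<n}\<close> R_def by auto
  fix z assume z: "q < z" "z < q'"
  show "z \<notin> R_set n lam"
  proof
    assume "z \<in> R_set n lam"
    then obtain i where i: "i < length ys" "z = ys ! i" using set_ys R_def by (metis UnI1 in_set_conv_nth)
    have mono: "ys ! a \<le> ys ! b" if "a \<le> b" "b < length ys" for a b
      using sorted that by (metis le_eq_less_or_eq order.strict_implies_order sorted_wrt_iff_nth_less)
    show False
    proof (cases "i < h")
      case True
      then have "ys ! i \<le> ys ! (h - 1)" using h by (intro mono) auto
      then show ?thesis using z i unfolding q by simp
    next
      case False then show ?thesis using mono[of h i] z i unfolding q' by simp
    qed
  qed
qed

lemma lam_after_descent:
  assumes "is_partition n lam" "p \<in> R_set n lam" "p < x" "x \<le> n"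
  shows "lam x < lam p"
proof -
  have "lam x \<le> lam (Suc p)" using is_partition_antimono[OF assms(1)] assms(3,4) by simp
  also have "\<dots> < lam p" using assms(2) unfolding R_set_def by simp
  finally show ?thesis .
qed

lemma carrel_const:
  assumes "is_partition n lam" "h \<in> {1..num_r n lam}"
    and "qpt n lam h < x" "x \<le> qpt n lam (Suc h)"
  shows "lam x = lam (qpt n lam (Suc h))"
proof -
  note carrel = carrel_bounds[OF assms(2)]
  have "lam y = lam (Suc (qpt n lam h))" if "qpt n lam h < y" "y \<le> qpt n lam (Suc h)" for y
    using carrel(3,5) that by (intro is_partition_const_between[OF assms(1)]) auto
  then show ?thesis using assms(3,4) carrel(2) by (metis order.refl)
qed

lemma crit_step_iff: "crit_step beta lo x y \<longleftrightarrow> lo < y \<and> y < x \<and> beta y + x < beta x + y"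
  unfolding crit_step_def by linarith

lemma crit_step_Greatest:
  assumes "\<exists>y. crit_step beta lo x y"
  shows "crit_step beta lo x (GREATEST y. crit_step beta lo x y)"
    and "\<And>y. crit_step beta lo x y \<Longrightarrow> y \<le> (GREATEST y. crit_step beta lo x y)"
proof -
  have bound: "\<And>y. crit_step beta lo x y \<Longrightarrow> y \<le> x" by (simp add: crit_step_iff)
  show "crit_step beta lo x (GREATEST y. crit_step beta lo x y)"
    using assms bound by (rule GreatestI_ex_nat)
  show "\<And>y. crit_step beta lo x y \<Longrightarrow> y \<le> (GREATEST y. crit_step beta lo x y)"
    using bound by (blast intro: Greatest_le_nat)
qed

lemma crit_idx_bounds:
  assumes "x \<in> crit_idx beta lo hi" "lo < hi"
  shows "lo < x \<and> x \<le> hi"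
  using assms(1)
proof (induction rule: crit_idx.induct)
  case (step x)
  then show ?case using crit_step_Greatest(1)[OF step.hyps(2)] by (simp add: crit_step_iff)
qed (use assms(2) in simp)

lemma crit_idx_slope:
  assumes "x \<in> crit_idx beta lo hi" "x < y" "y \<le> hi"
  shows "beta x + y < beta y + x"
  using assms
proof (induction arbitrary: y rule: crit_idx.induct)
  case start
  then show ?case by simp
next
  case (step x)
  let ?g = "GREATEST y. crit_step beta lo x y"
  have g: "beta ?g + x < beta x + ?g" "?g < x"
    using crit_step_Greatest(1)[OF step.hyps(2)] by (simp_all add: crit_step_iff)
  consider "x < y" | "y = x" | "y < x" by linarith
  then show ?case
  proof cases
    case 1
    then show ?thesis using step.IH[of y] step.prems g by simp
  next
    case 2
    then show ?thesis using g by simp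
  next
    case 3
    have "\<not> crit_step beta lo x y"
      using crit_step_Greatest(2)[of beta lo x y] step.prems by fastforce
    then have "beta x + y \<le> beta y + x"
      using 3 step.prems crit_step_Greatest(1)[OF step.hyps(2)] by (auto simp: crit_step_iff)
    then show ?thesis using g by simp
  qed
qed

lemma Min_crit_idx:
  assumes "lo < hi"
  shows "Min (crit_idx beta lo hi) \<in> crit_idx beta lo hi"
proof -
  have "crit_idx beta lo hi \<subseteq> {..hi}" using crit_idx_bounds assms by blast
  then have "finite (crit_idx beta lo hi)" by (rule finite_subset) simp
  then show ?thesis using crit_idx.start by (intro Min_in) auto
qed

lemma crit_idx_last_carrel:
  assumes "upper n beta" "x \<in> crit_idx beta lo n" "lo < n"
  shows "x = n"
proof (rule ccontr)
  assume "x \<noteq> n"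
  then have x: "0 < x" "x < n" using crit_idx_bounds[OF assms(2,3)] by auto
  then have "beta x + n < beta n + x" using crit_idx_slope[OF assms(2)] by simp
  moreover have "x \<le> beta x" "beta n \<le> n" using assms(1) x unfolding upper_def lam_tuple_def by auto
  ultimately show False by simp
qed

lemma last_index_above:
  fixes f :: "nat \<Rightarrow> nat"
  assumes "q < k" "f k < f q"
  obtains j where "q \<le> j" "j < k" "f k < f j" "\<And>x. j < x \<Longrightarrow> x < k \<Longrightarrow> f x \<le> f k"
proof -
  let ?P = "\<lambda>x. q \<le> x \<and> x < k \<and> f k < f x"
  have bound: "\<And>x. ?P x \<Longrightarrow> x \<le> k" by simp
  have "?P q" using assms by simp
  then have "?P (Greatest ?P)" using bound by (rule GreatestI_nat)
  moreover have "f x \<le> f k" if "Greatest ?P < x" "x < k" for x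
  proof (rule ccontr)
    assume "\<not> f x \<le> f k"
    then have "?P x" using that \<open>?P (Greatest ?P)\<close> by simp
    then have "x \<le> Greatest ?P" using bound by (rule Greatest_le_nat)
    then show False using that by simp
  qed
  ultimately show ?thesis using that by blast
qed

definition rotation :: "nat \<Rightarrow> nat \<Rightarrow> nat \<Rightarrow> nat" where
  "rotation j k m = (if j \<le> m \<and> m < k then Suc m else if m = k then j else m)"

lemma rotation_permutes:
  assumes "1 \<le> j" "j < k" "k \<le> n"
  shows "rotation j k permutes {1..n}" "rotation j k \<noteq> id"
proof -
  have inj: "inj (rotation j k)" unfolding inj_def rotation_def using assms(2) by auto
  have into: "rotation j k ` {1..n} \<subseteq> {1..n}" using assms unfolding rotation_def by auto
  show "rotation j k permutes {1..n}"
  proof (rule bij_imp_permutes)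
    show "bij_betw (rotation j k) {1..n} {1..n}"
      using endo_inj_surj[OF _ into] inj_on_subset[OF inj] by (simp add: bij_betw_def)
    show "\<And>x. x \<notin> {1..n} \<Longrightarrow> rotation j k x = x" using assms unfolding rotation_def by auto
  qed
  show "rotation j k \<noteq> id"
    using assms(2) by (metis id_apply less_irrefl rotation_def)
qed

locale rotation_setup =
  fixes n :: nat and lam beta :: "nat \<Rightarrow> nat" and j k q' L :: nat
  assumes partition: "is_partition n lam"
    and beta_ge: "\<And>i. 1 \<le> i \<Longrightarrow> i \<le> n \<Longrightarrow> i \<le> beta i"
    and order: "1 \<le> j" "j < k" "k \<le> q'" "q' \<le> n"
    and lam_block: "\<And>x. j < x \<Longrightarrow> x \<le> q' \<Longrightarrow> lam x = L"
    and lam_after: "\<And>x. q' < x \<Longrightarrow> x \<le> n \<Longrightarrow> lam x < L"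
    and L_pos: "1 \<le> L"
    and beta_j: "beta k < beta j"
    and beta_between: "\<And>x. j < x \<Longrightarrow> x < k \<Longrightarrow> beta x \<le> beta k"
    and beta_slope: "\<And>y. k < y \<Longrightarrow> y \<le> q' \<Longrightarrow> beta k + y < beta y + k"
begin

definition col :: "nat \<Rightarrow> nat" where
  "col m = lam m + n - m"

abbreviation rot :: "nat \<Rightarrow> nat" where
  "rot \<equiv> rotation j k"

definition turn_col :: "nat \<Rightarrow> nat" where
  "turn_col m = (if j \<le> m \<and> m < k then col (Suc m) else if k \<le> m \<and> m \<le> q' then col m - 1 else col m)"

definition turn_row :: "nat \<Rightarrow> nat" where
  "turn_row m = (if k \<le> m \<and> m \<le> q' then beta k + 1 + (m - k) else m)"

definition path :: "nat \<Rightarrow> (nat \<times> nat) list" where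
  "path m = stair_path (n - m) m (turn_col m) (turn_row m) (col (rot m)) (beta (rot m))"

lemma col_add: "m \<le> n \<Longrightarrow> col m + m = lam m + n"
  unfolding col_def by simp

lemma col_strict_antimono: "1 \<le> x \<Longrightarrow> x < y \<Longrightarrow> y \<le> n \<Longrightarrow> col y < col x"
  using is_partition_antimono[OF partition, of x y] col_add[of x] col_add[of y] by simp

lemma col_block: "j < m \<Longrightarrow> m \<le> q' \<Longrightarrow> col m + m = L + n"
  using col_add[of m] lam_block[of m] order by simp

lemma path_corners_ordered:
  assumes "1 \<le> m" "m \<le> n"
  shows "n - m \<le> turn_col m \<and> turn_col m \<le> col (rot m) \<and> m \<le> turn_row m \<and> turn_row m \<le> beta (rot m)"
proof -
  consider "m < j \<or> q' < m" | "j \<le> m" "m < k" | "m = k" | "k < m" "m \<le> q'"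
    by linarith
  then show ?thesis
  proof cases
    case 1
    then show ?thesis using beta_ge assms order
      unfolding turn_col_def turn_row_def rotation_def col_def by auto
  next
    case 2
    then show ?thesis using beta_ge[of "Suc m"] col_block[of "Suc m"] order L_pos
      unfolding turn_col_def turn_row_def rotation_def by auto
  next
    case 3
    then show ?thesis using beta_ge[of k] col_block[of k] col_strict_antimono[of j k] order beta_j L_pos
      unfolding turn_col_def turn_row_def rotation_def by auto
  next
    case 4
    then show ?thesis using beta_ge[of k] col_block[of m] beta_slope[of m] order L_pos
      unfolding turn_col_def turn_row_def rotation_def by auto
  qed
qed

lemma lattice_path_path: "1 \<le> m \<Longrightarrow> m \<le> n \<Longrightarrow> lattice_path (path m)"
  unfolding path_def using path_corners_ordered by (intro lattice_path_stair_path) auto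

lemma hd_path: "1 \<le> m \<Longrightarrow> m \<le> n \<Longrightarrow> hd (path m) = (n - m, m)"
  unfolding path_def using path_corners_ordered stair_path_successively_hd by simp

lemma last_path: "last (path m) = terminal n lam beta (rot m)"
  unfolding path_def terminal_def col_def by (simp add: last_stair_path)

definition separated :: "nat \<Rightarrow> nat \<Rightarrow> bool" where
  "separated m m' \<longleftrightarrow>
     col (rot m') < turn_col m \<or>
     (turn_col m' < col (rot m') \<and> col (rot m') = turn_col m \<and> turn_col m < col (rot m) \<and>
      turn_row m < turn_row m') \<or>
     (turn_col m' < turn_col m \<and> turn_col m = col (rot m) \<and> beta (rot m) < turn_row m')"

lemma paths_disjointI:
  assumes "1 \<le> m" "m < m'" "m' \<le> n" "separated m m'"
  shows "set (path m) \<inter> set (path m') = {}"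
  unfolding path_def
  using path_corners_ordered[of m] path_corners_ordered[of m'] assms
  by (intro stair_paths_disjoint) (auto simp: separated_def)

lemma separated_outside:
  assumes "1 \<le> m" "m < m'" "m' \<le> n" "m < j \<or> q' < m"
  shows "separated m m'"
proof -
  have "m < rot m'" "rot m' \<le> n" using assms order unfolding rotation_def by auto
  then have "col (rot m') < col m" using col_strict_antimono assms by simp
  moreover have "turn_col m = col m" using assms order unfolding turn_col_def by auto
  ultimately show ?thesis unfolding separated_def by simp
qed

lemma separated_rotated:
  assumes "1 \<le> m" "m < m'" "m' \<le> n" "j \<le> m" "m < k"
  shows "separated m m'"
proof -
  have tc: "turn_col m = col (Suc m)" "rot m = Suc m" using assms unfolding turn_col_def rotation_def by auto
  consider "m' < k" | "m' = k" | "k < m'" by linarith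
  then show ?thesis
  proof cases
    case 1
    then show ?thesis using col_strict_antimono[of "Suc m" "Suc m'"] assms order tc
      unfolding separated_def rotation_def by simp
  next
    case 2
    have "col k \<le> col (Suc m)" using col_strict_antimono[of "Suc m" k] assms 2 by (cases "Suc m = k") auto
    moreover have "1 \<le> col k" using col_block[of k] order L_pos by simp
    moreover have "beta (Suc m) \<le> beta k" using beta_between[of "Suc m"] assms by (cases "Suc m = k") auto
    moreover have "turn_col k = col k - 1" "turn_row k = beta k + 1"
      using order unfolding turn_col_def turn_row_def by simp_all
    ultimately show ?thesis using 2 tc unfolding separated_def by simp arith
  next
    case 3
    then show ?thesis using col_strict_antimono[of "Suc m" m'] assms tc
      unfolding separated_def rotation_def by simp
  qed
qed

lemma separated_block:
  assumes "1 \<le> m" "m < m'" "m' \<le> n" "k \<le> m" "m \<le> q'"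
  shows "separated m m'"
proof -
  have tc: "turn_col m = col m - 1" using assms unfolding turn_col_def by simp
  have cm: "col m + m = L + n" using col_block[of m] assms order by simp
  have rot': "rot m' = m'" using assms unfolding rotation_def by simp
  consider "q' < m'" | "m' \<le> q'" "m' \<noteq> Suc m" | "m' = Suc m" "m' \<le> q'" by linarith
  then show ?thesis
  proof cases
    case 1
    then have "col m' + m' < L + n" using col_add[of m'] lam_after[of m'] assms by simp
    then have "col m' < turn_col m" using cm tc assms by linarith
    then show ?thesis using rot' unfolding separated_def by simp
  next
    case 2
    then have "col m' < turn_col m" using col_block[of m'] cm tc assms order by linarith
    then show ?thesis using rot' unfolding separated_def by simp
  next
    case 3
    have "turn_col m < col (rot m)"
    proof (cases "m = k")
      case True
      then show ?thesis using col_strict_antimono[of j k] tc order unfolding rotation_def by simp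
    next
      case False
      then show ?thesis using tc cm L_pos assms unfolding rotation_def by simp
    qed
    moreover have "col m' = col m - 1" "1 \<le> col m'" using col_block[of m'] cm 3 assms order L_pos by simp_all
    ultimately show ?thesis using 3 tc rot' assms unfolding separated_def turn_col_def turn_row_def
      by simp arith
  qed
qed

lemma paths_disjoint:
  assumes "1 \<le> m" "m < m'" "m' \<le> n"
  shows "set (path m) \<inter> set (path m') = {}"
proof (rule paths_disjointI[OF assms])
  consider "m < j \<or> q' < m" | "j \<le> m" "m < k" | "k \<le> m" "m \<le> q'" by linarith
  then show "separated m m'"
    using separated_outside separated_rotated separated_block assms by cases blast+
qed

lemma path_in_LD: "path \<in> LD n lam beta rot"
  unfolding LD_def
proof (intro CollectI conjI ballI impI)
  fix m assume "m \<in> {1..n}"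
  then show "lattice_path (path m)" "hd (path m) = (n - m, m)" "last (path m) = terminal n lam beta (rot m)"
    using lattice_path_path hd_path last_path by auto
next
  fix m m' assume "m \<in> {1..n}" "m' \<in> {1..n}" "m \<noteq> m'"
  then show "set (path m) \<inter> set (path m') = {}"
    using paths_disjoint[of m m'] paths_disjoint[of m' m] by (cases "m < m'") auto
qed

lemma not_nonpermutable: "\<not> nonpermutable n lam beta"
  unfolding nonpermutable_def using rotation_permutes[of j k n] order path_in_LD by auto

end

lemma flag_critical_failure:
  assumes "is_partition n lam" "upper n beta" "\<not> flag_critical n lam beta"
  obtains q q' k where "1 \<le> q" "q < k" "k \<le> q'" "q' < n" "beta k < beta q"
    and "\<And>x. q < x \<Longrightarrow> x \<le> q' \<Longrightarrow> lam x = lam q'"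
    and "\<And>x. q' < x \<Longrightarrow> x \<le> n \<Longrightarrow> lam x < lam q'" "1 \<le> lam q'"
    and "\<And>y. k < y \<Longrightarrow> y \<le> q' \<Longrightarrow> beta k + y < beta y + k"
proof -
  obtain h where h: "h \<in> {1..num_r n lam}"
    and fail: "beta (Min (crit_idx beta (qpt n lam h) (qpt n lam (Suc h)))) < beta (qpt n lam h)"
    using assms(3) unfolding flag_critical_def by (auto simp: not_le)
  define q where "q = qpt n lam h"
  define q' where "q' = qpt n lam (Suc h)"
  define k where "k = Min (crit_idx beta q q')"
  note carrel = carrel_bounds[OF h, folded q_def q'_def]
  have q: "1 \<le> q" "q < n" using carrel(1) unfolding R_set_def by auto
  have k: "k \<in> crit_idx beta q q'" unfolding k_def using Min_crit_idx carrel(2) .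
  have qk: "q < k" "k \<le> q'" using crit_idx_bounds[OF k carrel(2)] by auto
  have beta_k: "beta k < beta q" using fail unfolding k_def q_def q'_def .
  have "q' \<noteq> n"
  proof
    assume "q' = n"
    then have "k = n" using crit_idx_last_carrel[OF assms(2)] k carrel(2) by blast
    moreover have "n \<le> beta n" "beta q \<le> n" using assms(2) q unfolding upper_def lam_tuple_def by auto
    ultimately show False using beta_k by simp
  qed
  then have q'_descent: "q' \<in> R_set n lam" using carrel(4) by simp
  show thesis
  proof (rule that)
    show "1 \<le> q" "q < k" "k \<le> q'" "q' < n" "beta k < beta q"
      using q qk carrel(3) \<open>q' \<noteq> n\<close> beta_k by simp_all
    show "lam x = lam q'" if "q < x" "x \<le> q'" for x
      using that by (intro carrel_const[OF assms(1) h, folded q_def q'_def])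
    show "\<And>x. q' < x \<Longrightarrow> x \<le> n \<Longrightarrow> lam x < lam q'"
      using lam_after_descent[OF assms(1) q'_descent] .
    show "1 \<le> lam q'" using q'_descent unfolding R_set_def by simp
    show "\<And>y. k < y \<Longrightarrow> y \<le> q' \<Longrightarrow> beta k + y < beta y + k"
      using crit_idx_slope[OF k] .
  qed
qed

theorem lemma6p2:
  fixes n :: nat and lam beta :: "nat \<Rightarrow> nat"
  assumes "1 \<le> n"
    and "is_partition n lam"
    and "upper n beta"
    and "\<not> UGC n lam beta"
  shows "\<not> nonpermutable n lam beta"
proof -
  obtain q q' k where qk: "1 \<le> q" "q < k" "k \<le> q'" "q' < n" "beta k < beta q"
    and block: "\<And>x. q < x \<Longrightarrow> x \<le> q' \<Longrightarrow> lam x = lam q'"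
    and after: "\<And>x. q' < x \<Longrightarrow> x \<le> n \<Longrightarrow> lam x < lam q'" "1 \<le> lam q'"
    and slope: "\<And>y. k < y \<Longrightarrow> y \<le> q' \<Longrightarrow> beta k + y < beta y + k"
    using flag_critical_failure[OF assms(2,3)] assms(3,4) unfolding UGC_def by metis
  obtain j where j: "q \<le> j" "j < k" "beta k < beta j" "\<And>x. j < x \<Longrightarrow> x < k \<Longrightarrow> beta x \<le> beta k"
    using last_index_above[where f = beta, OF qk(2,5)] by blast
  interpret rotation_setup n lam beta j k q' "lam q'"
  proof
    show "is_partition n lam" by (fact assms(2))
    show "\<And>i. 1 \<le> i \<Longrightarrow> i \<le> n \<Longrightarrow> i \<le> beta i" using assms(3) unfolding upper_def by simp
    show "1 \<le> j" "j < k" "k \<le> q'" "q' \<le> n" using qk j by simp_all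
    show "lam x = lam q'" if "j < x" "x \<le> q'" for x using j(1) that by (intro block) simp_all
    show "beta k < beta j" "\<And>x. j < x \<Longrightarrow> x < k \<Longrightarrow> beta x \<le> beta k" by (fact j)+
  qed (fact after slope)+
  show ?thesis by (rule not_nonpermutable)
qed

end
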